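(* Let $U$ be a nonempty open subset of $\mathbb{R}^d$ and $(x_n)_{n\ge1}$ a sequence in $\mathbb{R}^d$. Assume there is a nonempty dyadic cube $\lambda\subseteq U$ such that $\liminf_{j\to\infty}2^{-dj}\#\mathrm{M}((x_n)_{n\ge1};\lambda,j)=0$. Then $(x_n)_{n\ge1}$ is not uniformly eutaxic in $U$.
   Context: Fix a norm $|\cdot|$ on $\mathbb{R}^d$; $\mathcal{L}^d$ is Lebesgue measure. $\mathrm{P}_d$ is the set of real sequences $(r_n)_{n\ge1}$ with $r_{n+1}\le r_n$ for all $n$, $r_n\to0$ and $\sum_n r_n^d=\infty$. A sequence $(x_n)$ in $\mathbb{R}^d$ is uniformly eutaxic in $U$ if for every $(r_n)\in\mathrm{P}_d$, $\mathcal{L}^d$-almost every $x\in U$ satisfies $|x-x_n|<r_n$ for infinitely many $n$. A dyadic cube is a set $\lambda=2^{-j}(k+[0,1)^d)$ with $j\in\mathbb{Z}$, $k\in\mathbb{Z}^d$; its generation is $\langle\lambda\rangle=j$. For a nonempty dyadic cube $\lambda$ and an integer $j\ge0$, $\mathrm{M}((x_n)_{n\ge1};\lambda,j)$ is the set of dyadic cubes $\lambda'\subseteq\lambda$ of generation $\langle\lambda\rangle+j$ such that $x_n\in\lambda'$ for some $n\le2^{d\langle\lambda'\rangle}$. *)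

theory Defs
  imports "HOL-Analysis.Analysis"
begin

definition is_norm :: "('a::real_vector \<Rightarrow> real) \<Rightarrow> bool" where
  "is_norm N \<longleftrightarrow> (\<forall>x. 0 \<le> N x) \<and> (\<forall>x. N x = 0 \<longleftrightarrow> x = 0)
     \<and> (\<forall>c x. N (scaleR c x) = \<bar>c\<bar> * N x) \<and> (\<forall>x y. N (x + y) \<le> N x + N y)"

text \<open>The class P_d of radius sequences (indexed from n = 1; r 0 is irrelevant).\<close>
definition P_seq :: "nat \<Rightarrow> (nat \<Rightarrow> real) \<Rightarrow> bool" where
  "P_seq d r \<longleftrightarrow> (\<forall>n\<ge>1. r (Suc n) \<le> r n) \<and> (r \<longlonglongrightarrow> 0)
     \<and> \<not> summable (\<lambda>n. r (Suc n) ^ d)"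

definition unif_eutaxic ::
  "(real^'n \<Rightarrow> real) \<Rightarrow> (nat \<Rightarrow> real^'n) \<Rightarrow> (real^'n) set \<Rightarrow> bool" where
  "unif_eutaxic N x U \<longleftrightarrow> (\<forall>r. P_seq CARD('n) r \<longrightarrow>
     (AE y in lebesgue. y \<in> U \<longrightarrow> infinite {n. n \<ge> 1 \<and> N (y - x n) < r n}))"

text \<open>Dyadic cube 2^(-j)(k + [0,1)^d).\<close>
definition dyadic_cube :: "int \<Rightarrow> int^'n \<Rightarrow> (real^'n) set" where
  "dyadic_cube j k = {y. \<forall>i. real_of_int (k$i) \<le> 2 powi j * y$i
                          \<and> 2 powi j * y$i < real_of_int (k$i) + 1}"

text \<open>M((x_n); lambda, j) for lambda = dyadic_cube j0 k0 (of generation j0).\<close>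
definition dyadic_M :: "(nat \<Rightarrow> real^'n) \<Rightarrow> int \<Rightarrow> int^'n \<Rightarrow> nat \<Rightarrow> (real^'n) set set" where
  "dyadic_M x j0 k0 j = {l. \<exists>k. l = dyadic_cube (j0 + int j) k \<and> l \<subseteq> dyadic_cube j0 k0
      \<and> (\<exists>n\<ge>1. real n \<le> 2 powi (int CARD('n) * (j0 + int j)) \<and> x n \<in> l)}"

end

(* Fix generations j_m along which 2^(-d j_m) #M(lambda, j_m) decays geometrically, and give
   the indices n in the block (2^(d g_(m-1)), 2^(d g_m)], g_m = <lambda> + j_m, the radius
   r_n = c 2^(-g_m), where c |.| <= N.  Each block contributes at least c^d/2 to sum r_n^d, so
   (r_n) lies in P_d.  If a point y of the central half cube of lambda satisfies N(y - x_n) < r_n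
   with n in block m, then x_n lies in lambda, in a cube of M(lambda, j_m), and y lies in the
   threefold enlargement of that cube.  These enlargements have total measure at most
   (3 2^(-<lambda>))^d 2^(-d j_m) #M(lambda, j_m), which sums to half the measure of the central
   half cube; so a subset of U of positive measure is never approximated. *)

theory Submission
  imports Defs
begin

section \<open>Norms on \<open>real^'n\<close>\<close>

lemma
  assumes "is_norm N"
  shows is_norm_nonneg: "0 \<le> N v"
    and is_norm_zero [simp]: "N 0 = 0"
    and is_norm_scaleR: "N (c *\<^sub>R v) = \<bar>c\<bar> * N v"
    and is_norm_triangle: "N (u + v) \<le> N u + N v"
    and is_norm_eq_0_iff: "N v = 0 \<longleftrightarrow> v = 0"
  using assms by (auto simp: is_norm_def)

lemma is_norm_sum_le:
  assumes "is_norm N" "finite I"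
  shows "N (sum f I) \<le> (\<Sum>i\<in>I. N (f i))"
  using assms(2)
proof (induction rule: finite_induct)
  case (insert i I)
  then show ?case
    using is_norm_triangle[OF assms(1), of "f i" "sum f I"] by simp
qed (simp add: assms(1))

lemma is_norm_le_norm:
  fixes N :: "real^'n \<Rightarrow> real"
  assumes "is_norm N"
  obtains B where "0 \<le> B" "\<And>v. N v \<le> B * norm v"
proof
  show "0 \<le> (\<Sum>i\<in>UNIV. N (axis i 1))"
    by (simp add: sum_nonneg is_norm_nonneg[OF assms])
  fix v :: "real^'n"
  have "N v = N (\<Sum>i\<in>UNIV. v $ i *\<^sub>R axis i 1)"
    using basis_expansion[of v] by (simp add: scalar_mult_eq_scaleR)
  also have "\<dots> \<le> (\<Sum>i\<in>UNIV. \<bar>v $ i\<bar> * N (axis i 1))"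
    using is_norm_sum_le[OF assms, of UNIV "\<lambda>i. v $ i *\<^sub>R axis i 1"]
    by (simp add: is_norm_scaleR[OF assms])
  also have "\<dots> \<le> (\<Sum>i\<in>UNIV. norm v * N (axis i 1))"
    by (intro sum_mono mult_right_mono component_le_norm_cart is_norm_nonneg[OF assms])
  finally show "N v \<le> (\<Sum>i\<in>UNIV. N (axis i 1)) * norm v"
    by (simp add: sum_distrib_left mult.commute)
qed

lemma is_norm_continuous_on:
  fixes N :: "real^'n \<Rightarrow> real"
  assumes "is_norm N"
  shows "continuous_on S N"
proof -
  obtain B where "0 \<le> B" and B: "\<And>v. N v \<le> B * norm v"
    using is_norm_le_norm[OF assms] by blast
  have "\<bar>N u - N v\<bar> \<le> B * norm (u - v)" for u v
  proof -
    have "N u \<le> N v + N (u - v)" "N v \<le> N u + N (v - u)"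
      using is_norm_triangle[OF assms, of v "u - v"] is_norm_triangle[OF assms, of u "v - u"]
      by simp_all
    moreover have "N (v - u) = N (u - v)"
      using is_norm_scaleR[OF assms, of "-1" "u - v"] by simp
    ultimately show ?thesis using B[of "u - v"] by linarith
  qed
  with \<open>0 \<le> B\<close> have "B-lipschitz_on S N"
    by (intro lipschitz_onI) (auto simp: dist_norm)
  then show ?thesis by (rule lipschitz_on_continuous_on)
qed

lemma is_norm_ge_norm:
  fixes N :: "real^'n \<Rightarrow> real"
  assumes "is_norm N"
  obtains c where "c > 0" "\<And>v. c * norm v \<le> N v"
proof -
  obtain z :: "real^'n" where z: "norm z = 1" and zmin: "\<And>y. norm y = 1 \<Longrightarrow> N z \<le> N y"
    using continuous_attains_inf[OF compact_sphere _ is_norm_continuous_on[OF assms], of 0 1]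
    by (auto simp: sphere_eq_empty)
  have "N z * norm v \<le> N v" for v
  proof (cases "v = 0")
    case False
    then have "N z \<le> N ((1 / norm v) *\<^sub>R v)" using zmin by simp
    also have "\<dots> = N v / norm v" by (simp add: is_norm_scaleR[OF assms])
    finally show ?thesis using False by (simp add: field_simps)
  qed (simp add: assms)
  moreover have "N z > 0"
    using z is_norm_nonneg[OF assms] is_norm_eq_0_iff[OF assms] by (metis less_eq_real_def norm_zero zero_neq_one)
  ultimately show ?thesis using that by blast
qed

section \<open>Dyadic cubes\<close>

definition dyadic_index :: "int \<Rightarrow> real^'n \<Rightarrow> int^'n" where
  "dyadic_index g y = (\<chi> i. \<lfloor>2 powi g * y $ i\<rfloor>)"

lemma mem_dyadic_cube_iff: "y \<in> dyadic_cube g k \<longleftrightarrow> dyadic_index g y = k"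
  by (auto simp: dyadic_cube_def dyadic_index_def vec_eq_iff floor_eq_iff)

lemma dyadic_cube_nonempty: "dyadic_cube g k \<noteq> {}"
proof -
  have "(\<chi> i. (real_of_int (k $ i) + 1/2) / 2 powi g) \<in> dyadic_cube g k"
    by (simp add: dyadic_cube_def)
  then show ?thesis by blast
qed

lemma inj_dyadic_cube: "inj (dyadic_cube g)"
  by (metis dyadic_cube_nonempty equals0I injI mem_dyadic_cube_iff)

lemma dyadic_index_parent:
  "dyadic_index g y $ i = dyadic_index (g + int j) y $ i div 2 ^ j"
proof -
  have "2 powi (g + int j) * y $ i / real_of_int (2 ^ j) = 2 powi g * y $ i"
    by (simp add: power_int_add)
  then show ?thesis
    using floor_divide_real_eq_div[of "2 ^ j" "2 powi (g + int j) * y $ i"]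
    by (simp add: dyadic_index_def)
qed

lemma dyadic_cube_subset_parent:
  "dyadic_cube (g + int j) k \<subseteq> dyadic_cube g (\<chi> i. k $ i div 2 ^ j)"
  by (auto simp: mem_dyadic_cube_iff vec_eq_iff dyadic_index_parent[of g _ _ j])

lemma emeasure_cbox_cart:
  fixes a b :: "real^'n"
  assumes "\<And>i. a $ i \<le> b $ i"
  shows "emeasure lebesgue (cbox a b) = ennreal (\<Prod>i\<in>UNIV. b $ i - a $ i)"
proof -
  have "cbox a b \<noteq> {}"
    using assms by (auto simp: box_ne_empty(1) cart_eq_inner_axis Basis_vec_def)
  moreover have "emeasure lborel (cbox a b) = ennreal (Henstock_Kurzweil_Integration.content (cbox a b))"
    by (rule emeasure_eq_ennreal_measure) (simp add: emeasure_lborel_cbox_eq)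
  ultimately show ?thesis
    by (simp add: content_cbox_cart)
qed

lemma scaled_component_dist_lt:
  fixes x y :: "real^'n"
  assumes "norm (y - x) < r / t" "t > 0"
  shows "\<bar>t * y $ i - t * x $ i\<bar> < r"
proof -
  have "\<bar>t * y $ i - t * x $ i\<bar> = t * \<bar>(y - x) $ i\<bar>"
    using assms(2) by (simp add: abs_mult flip: right_diff_distrib)
  also have "\<dots> < t * (r / t)"
    using assms component_le_norm_cart[of "y - x" i] by (intro mult_strict_left_mono) auto
  finally show ?thesis using assms(2) by simp
qed

text \<open>The cube of index \<open>k\<close> together with its \<open>3^d - 1\<close> neighbours.\<close>
definition dyadic_enlarged :: "int \<Rightarrow> int^'n \<Rightarrow> (real^'n) set" where
  "dyadic_enlarged g k =
     cbox (\<chi> i. (real_of_int (k $ i) - 1) / 2 powi g) (\<chi> i. (real_of_int (k $ i) + 2) / 2 powi g)"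

definition dyadic_core :: "int \<Rightarrow> int^'n \<Rightarrow> (real^'n) set" where
  "dyadic_core g k =
     cbox (\<chi> i. (real_of_int (k $ i) + 1/4) / 2 powi g) (\<chi> i. (real_of_int (k $ i) + 3/4) / 2 powi g)"

lemma emeasure_dyadic_enlarged:
  "emeasure lebesgue (dyadic_enlarged g (k :: int^'n)) = ennreal ((3 / 2 powi g) ^ CARD('n))"
  unfolding dyadic_enlarged_def
  by (subst emeasure_cbox_cart) (simp_all add: divide_right_mono diff_divide_distrib[symmetric])

lemma emeasure_dyadic_core:
  "emeasure lebesgue (dyadic_core g (k :: int^'n)) = ennreal ((1 / (2 * 2 powi g)) ^ CARD('n))"
  unfolding dyadic_core_def
  by (subst emeasure_cbox_cart) (simp_all add: divide_right_mono diff_divide_distrib[symmetric])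

lemma dyadic_enlarged_sets [measurable]: "dyadic_enlarged g k \<in> sets lebesgue"
  unfolding dyadic_enlarged_def by (simp add: fmeasurableD lmeasurable_cbox)

lemma dyadic_core_subset: "dyadic_core g k \<subseteq> dyadic_cube g k"
proof
  fix y assume "y \<in> dyadic_core g k"
  then have core: "real_of_int (k $ i) + 1/4 \<le> 2 powi g * y $ i \<and> 2 powi g * y $ i \<le> real_of_int (k $ i) + 3/4"
    for i by (simp add: dyadic_core_def mem_box_cart field_simps)
  have "real_of_int (k $ i) \<le> 2 powi g * y $ i \<and> 2 powi g * y $ i < real_of_int (k $ i) + 1" for i
    using core[of i] by linarith
  then show "y \<in> dyadic_cube g k"
    by (simp add: dyadic_cube_def)
qed

lemma mem_dyadic_enlarged_if_near:
  assumes "x \<in> dyadic_cube g k" "norm (y - x) < 1 / 2 powi g"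
  shows "y \<in> dyadic_enlarged g k"
proof -
  have cube: "real_of_int (k $ i) \<le> 2 powi g * x $ i \<and> 2 powi g * x $ i < real_of_int (k $ i) + 1"
    and near: "\<bar>2 powi g * y $ i - 2 powi g * x $ i\<bar> < 1" for i
    using assms scaled_component_dist_lt[OF assms(2)] by (simp_all add: dyadic_cube_def)
  have "real_of_int (k $ i) - 1 \<le> 2 powi g * y $ i \<and> 2 powi g * y $ i \<le> real_of_int (k $ i) + 2" for i
    using cube[of i] near[of i] by linarith
  then show ?thesis
    by (simp add: dyadic_enlarged_def mem_box_cart field_simps)
qed

lemma mem_dyadic_cube_if_near_core:
  assumes "y \<in> dyadic_core g k" "norm (y - x) < 1 / (4 * 2 powi g)"
  shows "x \<in> dyadic_cube g k"
proof -
  have core: "real_of_int (k $ i) + 1/4 \<le> 2 powi g * y $ i \<and> 2 powi g * y $ i \<le> real_of_int (k $ i) + 3/4"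
    and near: "\<bar>2 powi g * y $ i - 2 powi g * x $ i\<bar> < 1/4" for i
    using assms scaled_component_dist_lt[of y x "1/4" "2 powi g" i]
    by (simp_all add: dyadic_core_def mem_box_cart field_simps)
  have "real_of_int (k $ i) \<le> 2 powi g * x $ i \<and> 2 powi g * x $ i < real_of_int (k $ i) + 1" for i
    using core[of i] near[of i] by linarith
  then show ?thesis
    by (simp add: dyadic_cube_def)
qed

section \<open>Neighbourhoods of the cubes of \<open>M\<close>\<close>

lemma finite_dyadic_M:
  fixes x :: "nat \<Rightarrow> real^'n"
  shows "finite (dyadic_M x j0 k0 j)"
proof -
  define g where "g = j0 + int j"
  obtain B :: nat where B: "2 powi (int CARD('n) * g) \<le> real B"
    using real_arch_simple by blast
  have "dyadic_M x j0 k0 j \<subseteq> (\<lambda>n. dyadic_cube g (dyadic_index g (x n))) ` {..B}"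
  proof
    fix l assume "l \<in> dyadic_M x j0 k0 j"
    then obtain k n where "l = dyadic_cube g k" "real n \<le> 2 powi (int CARD('n) * g)" "x n \<in> l"
      by (auto simp: dyadic_M_def g_def)
    with B show "l \<in> (\<lambda>n. dyadic_cube g (dyadic_index g (x n))) ` {..B}"
      by (auto simp: mem_dyadic_cube_iff)
  qed
  then show ?thesis by (rule finite_subset) simp
qed

definition enlarged_dyadic_M ::
  "(nat \<Rightarrow> real^'n) \<Rightarrow> int \<Rightarrow> int^'n \<Rightarrow> nat \<Rightarrow> (real^'n) set" where
  "enlarged_dyadic_M x j0 k0 j =
     (\<Union>k\<in>{k. dyadic_cube (j0 + int j) k \<in> dyadic_M x j0 k0 j}. dyadic_enlarged (j0 + int j) k)"

lemma bij_betw_dyadic_M: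
  "bij_betw (dyadic_cube (j0 + int j)) {k. dyadic_cube (j0 + int j) k \<in> dyadic_M x j0 k0 j}
     (dyadic_M x j0 k0 j)"
  by (auto simp: bij_betw_def inj_on_def inj_dyadic_cube[THEN injD] dyadic_M_def)

lemma
  fixes x :: "nat \<Rightarrow> real^'n"
  shows enlarged_dyadic_M_sets [measurable]: "enlarged_dyadic_M x j0 k0 j \<in> sets lebesgue"
    and emeasure_enlarged_dyadic_M_le:
      "emeasure lebesgue (enlarged_dyadic_M x j0 k0 j)
         \<le> ennreal ((3 / 2 powi j0) ^ CARD('n)
                    * (2 powi (- (int CARD('n) * int j)) * real (card (dyadic_M x j0 k0 j))))"
proof -
  define I where "I = {k. dyadic_cube (j0 + int j) k \<in> dyadic_M x j0 k0 j}"
  have "finite I" "card I = card (dyadic_M x j0 k0 j)"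
    using bij_betw_dyadic_M[of j0 j x k0] finite_dyadic_M
    by (simp_all add: I_def bij_betw_finite bij_betw_same_card)
  then show "enlarged_dyadic_M x j0 k0 j \<in> sets lebesgue"
    by (auto simp: enlarged_dyadic_M_def I_def[symmetric])
  have "emeasure lebesgue (enlarged_dyadic_M x j0 k0 j)
          \<le> (\<Sum>k\<in>I. emeasure lebesgue (dyadic_enlarged (j0 + int j) k))"
    unfolding enlarged_dyadic_M_def I_def[symmetric]
    using \<open>finite I\<close> by (intro emeasure_subadditive_finite) auto
  also have "\<dots> = ennreal (real (card I) * (3 / 2 powi (j0 + int j)) ^ CARD('n))"
    by (simp add: emeasure_dyadic_enlarged ennreal_of_nat_eq_real_of_nat ennreal_mult')
  also have "real (card I) * (3 / 2 powi (j0 + int j)) ^ CARD('n)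
      = (3 / 2 powi j0) ^ CARD('n) * (2 powi (- (int CARD('n) * int j)) * real (card (dyadic_M x j0 k0 j)))"
  proof -
    have "2 powi (- (int CARD('n) * int j)) = 1 / (2::real) ^ (j * CARD('n))"
      by (simp add: power_int_minus_divide mult.commute flip: power_int_of_nat)
    moreover have "2 powi (j0 + int j) = 2 powi j0 * (2::real) ^ j"
      by (simp add: power_int_add)
    ultimately show ?thesis
      by (simp add: \<open>card I = _\<close> power_divide power_mult_distrib power_mult)
  qed
  finally show "emeasure lebesgue (enlarged_dyadic_M x j0 k0 j) \<le> ennreal \<dots>" .
qed

lemma dyadic_cube_subset_ancestor:
  assumes "x \<in> dyadic_cube g k0"
  shows "dyadic_cube (g + int j) (dyadic_index (g + int j) x) \<subseteq> dyadic_cube g k0"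
proof -
  have "(\<chi> i. dyadic_index (g + int j) x $ i div 2 ^ j) = k0"
    using assms by (simp add: mem_dyadic_cube_iff vec_eq_iff flip: dyadic_index_parent)
  then show ?thesis
    using dyadic_cube_subset_parent[of g j] by metis
qed

lemma mem_enlarged_dyadic_M_if_near:
  fixes x :: "nat \<Rightarrow> real^'n"
  assumes "2 \<le> j" "y \<in> dyadic_core j0 k0" "1 \<le> n"
    and "real n \<le> 2 powi (int CARD('n) * (j0 + int j))"
    and "norm (y - x n) < 1 / 2 powi (j0 + int j)"
  shows "y \<in> enlarged_dyadic_M x j0 k0 j"
proof -
  define g where "g = j0 + int j"
  define k where "k = dyadic_index g (x n)"
  have near: "norm (y - x n) < 1 / 2 powi g"
    using assms(5) by (simp add: g_def)
  have "4 * 2 powi j0 \<le> 2 powi j0 * (2::real) ^ j"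
    using power_increasing[OF assms(1), of "2::real"] by simp
  then have "1 / 2 powi g \<le> 1 / (4 * 2 powi j0 :: real)"
    by (simp add: g_def power_int_add frac_le)
  then have "x n \<in> dyadic_cube j0 k0"
    using assms(2) near by (intro mem_dyadic_cube_if_near_core) auto
  then have "dyadic_cube g k \<subseteq> dyadic_cube j0 k0"
    unfolding g_def k_def by (rule dyadic_cube_subset_ancestor)
  moreover have "x n \<in> dyadic_cube g k"
    by (simp add: k_def mem_dyadic_cube_iff)
  ultimately have "dyadic_cube g k \<in> dyadic_M x j0 k0 j"
    using assms(3,4) by (auto simp: dyadic_M_def g_def)
  moreover have "y \<in> dyadic_enlarged g k"
    using \<open>x n \<in> dyadic_cube g k\<close> near by (rule mem_dyadic_enlarged_if_near)
  ultimately show ?thesis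
    by (auto simp: enlarged_dyadic_M_def g_def)
qed

section \<open>Radius sequences adapted to sparse generations\<close>

lemma liminf_eq_0_subseq:
  fixes f e :: "nat \<Rightarrow> real"
  assumes "liminf (\<lambda>j. ereal (f j)) = 0" "\<And>m. 0 < e m"
  obtains J where "strict_mono J" "B \<le> J 0" "\<And>m. f (J m) < e m"
proof -
  have "\<exists>j\<ge>j'. f j < \<epsilon>" if "0 < \<epsilon>" for \<epsilon> j'
  proof (rule ccontr)
    assume "\<not> ?thesis"
    then have "eventually (\<lambda>j. ereal \<epsilon> \<le> ereal (f j)) sequentially"
      by (auto simp: eventually_sequentially not_less)
    then have "ereal \<epsilon> \<le> liminf (\<lambda>j. ereal (f j))"
      by (rule Liminf_bounded)
    with assms(1) that show False by simp
  qed
  then have "\<forall>j' m. \<exists>j. j' \<le> j \<and> f j < e m"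
    using assms(2) by blast
  then obtain pick where pick: "\<And>j' m. j' \<le> pick j' m \<and> f (pick j' m) < e m"
    by metis
  define J where "J = rec_nat (pick B 0) (\<lambda>m j. pick (Suc j) (Suc m))"
  have J_0: "J 0 = pick B 0" and J_Suc: "J (Suc m) = pick (Suc (J m)) (Suc m)" for m
    by (simp_all add: J_def)
  show thesis
  proof
    show "strict_mono J"
      by (rule strict_monoI_Suc) (metis J_Suc pick Suc_le_lessD)
    show "B \<le> J 0"
      using pick by (simp add: J_0)
    show "f (J m) < e m" for m
      using pick by (cases m) (simp_all add: J_0 J_Suc)
  qed
qed

lemma emeasure_le_geometric_cover:
  assumes "S \<subseteq> N0 \<union> (\<Union>m. A m)" "N0 \<in> null_sets M" "\<And>m. A m \<in> sets M"
    and "\<And>m. emeasure M (A m) \<le> ennreal (a * (1/2) ^ m)" "0 \<le> a"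
  shows "emeasure M S \<le> ennreal (2 * a)"
proof -
  have "emeasure M S \<le> emeasure M (N0 \<union> (\<Union>m. A m))"
    using assms(1-3) by (intro emeasure_mono) auto
  also have "\<dots> \<le> emeasure M N0 + emeasure M (\<Union>m. A m)"
    using assms(2,3) by (intro emeasure_subadditive) auto
  also have "\<dots> \<le> (\<Sum>m. emeasure M (A m))"
    using assms(2,3) by (simp add: null_setsD1 emeasure_subadditive_countably image_subset_iff)
  also have "\<dots> \<le> (\<Sum>m. ennreal (a * (1/2) ^ m))"
    by (intro suminf_le assms(4)) auto
  also have "\<dots> = ennreal (\<Sum>m. a * (1/2) ^ m)"
    using assms(5) by (intro suminf_ennreal2 summable_mult summable_geometric) auto
  also have "(\<Sum>m. a * (1/2::real) ^ m) = 2 * a"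
    by (simp add: suminf_mult suminf_geometric summable_geometric)
  finally show ?thesis .
qed

text \<open>The index \<open>m\<close> of the block \<open>(2^(d G (m-1)), 2^(d G m)]\<close> containing \<open>n\<close>.\<close>
definition dyadic_block :: "nat \<Rightarrow> (nat \<Rightarrow> nat) \<Rightarrow> nat \<Rightarrow> nat" where
  "dyadic_block d G n = (LEAST m. n \<le> 2 ^ (d * G m))"

context
  fixes d :: nat and G :: "nat \<Rightarrow> nat"
  assumes G: "strict_mono G" and d: "1 \<le> d"
begin

lemma le_two_power_G: "n \<le> 2 ^ (d * G n)"
proof -
  have "n \<le> G n" using G by (rule strict_mono_imp_increasing)
  also have "\<dots> \<le> d * G n" using d by simp
  also have "\<dots> < 2 ^ (d * G n)" by (rule less_exp)
  finally show ?thesis by simp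
qed

lemma le_dyadic_block: "n \<le> 2 ^ (d * G (dyadic_block d G n))"
  unfolding dyadic_block_def by (rule LeastI) (rule le_two_power_G)

lemma dyadic_block_le_iff: "dyadic_block d G n \<le> m \<longleftrightarrow> n \<le> 2 ^ (d * G m)"
proof
  assume "dyadic_block d G n \<le> m"
  then have "2 ^ (d * G (dyadic_block d G n)) \<le> (2::nat) ^ (d * G m)"
    using G by (simp add: strict_mono_less_eq)
  with le_dyadic_block show "n \<le> 2 ^ (d * G m)" by (rule order_trans)
qed (simp add: dyadic_block_def Least_le)

lemma mono_dyadic_block: "mono (dyadic_block d G)"
proof
  fix n n' :: nat assume "n \<le> n'"
  then show "dyadic_block d G n \<le> dyadic_block d G n'"
    using le_dyadic_block[of n'] by (simp add: dyadic_block_le_iff)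
qed

lemma filterlim_dyadic_block: "filterlim (dyadic_block d G) at_top sequentially"
  unfolding filterlim_at_top eventually_sequentially
proof (intro allI exI impI)
  fix m n assume "Suc (2 ^ (d * G m)) \<le> n"
  then have "\<not> dyadic_block d G n \<le> m"
    by (simp add: dyadic_block_le_iff)
  then show "m \<le> dyadic_block d G n" by simp
qed

lemma dyadic_block_Suc_eq:
  assumes "2 ^ (d * G m) \<le> k" "k < 2 ^ (d * G (Suc m))"
  shows "dyadic_block d G (Suc k) = Suc m"
proof (rule antisym)
  show "dyadic_block d G (Suc k) \<le> Suc m"
    using assms(2) by (simp add: dyadic_block_le_iff)
  show "Suc m \<le> dyadic_block d G (Suc k)"
    using assms(1) dyadic_block_le_iff[of "Suc k" m] by simp
qed

lemma sum_dyadic_block_radius_ge: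
  fixes c :: real
  assumes "0 \<le> c"
  shows "c ^ d / 2 \<le> (\<Sum>k = 2 ^ (d * G m)..<2 ^ (d * G (Suc m)). (c / 2 ^ G (dyadic_block d G (Suc k))) ^ d)"
proof -
  define lo hi :: nat where "lo = 2 ^ (d * G m)" and "hi = 2 ^ (d * G (Suc m))"
  have "d * G m + 1 \<le> d * G (Suc m)"
    using d strict_monoD[OF G, of m "Suc m"] mult_le_mono2[of "G m + 1" "G (Suc m)" d] by simp
  then have "2 ^ (d * G m + 1) \<le> (2::nat) ^ (d * G (Suc m))"
    by (rule power_increasing) simp
  then have "2 * real lo \<le> real hi"
    unfolding lo_def hi_def by (metis of_nat_le_iff of_nat_mult of_nat_numeral power_Suc Suc_eq_plus1 mult.commute)
  have "(\<Sum>k = lo..<hi. (c / 2 ^ G (dyadic_block d G (Suc k))) ^ d) = (\<Sum>k = lo..<hi. c ^ d / real hi)"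
  proof (rule sum.cong)
    fix k assume "k \<in> {lo..<hi}"
    then have "dyadic_block d G (Suc k) = Suc m"
      by (simp add: lo_def hi_def dyadic_block_Suc_eq)
    moreover have "real hi = (2 ^ G (Suc m)) ^ d"
      by (simp add: hi_def mult.commute[of d] power_mult)
    ultimately show "(c / 2 ^ G (dyadic_block d G (Suc k))) ^ d = c ^ d / real hi"
      by (simp add: power_divide)
  qed simp
  also have "\<dots> = (real hi - real lo) * (c ^ d / real hi)"
    using \<open>2 * real lo \<le> real hi\<close> by (simp add: of_nat_diff)
  also have "\<dots> = c ^ d * ((real hi - real lo) / real hi)"
    by simp
  also have "\<dots> \<ge> c ^ d * (1 / 2)"
    using \<open>2 * real lo \<le> real hi\<close> assms
    by (intro mult_left_mono) (simp_all add: hi_def field_simps)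
  finally show ?thesis by (simp add: lo_def hi_def)
qed

lemma P_seq_dyadic_block_radius:
  fixes c :: real
  assumes "0 < c"
  shows "P_seq d (\<lambda>n. c / 2 ^ G (dyadic_block d G n))"
  unfolding P_seq_def
proof (intro conjI allI impI notI)
  show "c / 2 ^ G (dyadic_block d G (Suc n)) \<le> c / 2 ^ G (dyadic_block d G n)" for n
    using assms monoD[OF mono_dyadic_block, of n "Suc n"] G
    by (intro divide_left_mono power_increasing) (simp_all add: strict_mono_less_eq)
  have "filterlim (\<lambda>n. G (dyadic_block d G n)) at_top sequentially"
    using filterlim_subseq[OF G] filterlim_dyadic_block by (rule filterlim_compose)
  then have "(\<lambda>n. c * (1/2) ^ G (dyadic_block d G n)) \<longlonglongrightarrow> c * 0"
    by (intro tendsto_mult tendsto_const filterlim_compose[OF LIMSEQ_realpow_zero]) auto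
  then show "(\<lambda>n. c / 2 ^ G (dyadic_block d G n)) \<longlonglongrightarrow> 0"
    by (simp add: power_one_over)
next
  assume "summable (\<lambda>n. (c / 2 ^ G (dyadic_block d G (Suc n))) ^ d)"
  then obtain n0 where n0: "\<And>m n. n0 \<le> m \<Longrightarrow>
      norm (\<Sum>k = m..<n. (c / 2 ^ G (dyadic_block d G (Suc k))) ^ d) < c ^ d / 2"
    using assms unfolding summable_Cauchy by (meson half_gt_zero zero_less_power)
  then show False
    using n0[OF le_two_power_G] sum_dyadic_block_radius_ge[of c n0] assms
    by (smt (verit) real_norm_def)
qed

end

lemma radius_adapted_to_generations:
  fixes N :: "real^'n \<Rightarrow> real" and x :: "nat \<Rightarrow> real^'n" and J :: "nat \<Rightarrow> nat"
  assumes "0 < c" "\<And>v. c * norm v \<le> N v" "strict_mono J" "nat (- j0) + 2 \<le> J 0"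
  obtains r where "P_seq CARD('n) r"
    "\<And>y n. y \<in> dyadic_core j0 k0 \<Longrightarrow> 1 \<le> n \<Longrightarrow> N (y - x n) < r n
       \<Longrightarrow> \<exists>m. y \<in> enlarged_dyadic_M x j0 k0 (J m)"
proof -
  define G where "G m = nat (j0 + int (J m))" for m
  have J_ge: "nat (- j0) + 2 \<le> J m" for m
    using assms(4) strict_mono_less_eq[OF assms(3), of 0 m] by simp
  have gen_nonneg: "0 \<le> j0 + int (J m)" for m
    using J_ge[of m] nat_le_iff[of "- j0" "J m"] by linarith
  then have G_eq: "2 ^ G m = (2 powi (j0 + int (J m)) :: real)"
    and G_pow_eq: "2 ^ (CARD('n) * G m) = (2 powi (int CARD('n) * (j0 + int (J m))) :: real)" for m
    by (simp_all add: G_def power_int_def power_mult nat_mult_distrib)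
  have "strict_mono G"
  proof (rule strict_monoI)
    fix m m' :: nat assume "m < m'"
    then have "J m < J m'" using assms(3) by (simp add: strict_mono_less)
    then show "G m < G m'"
      using gen_nonneg[of m] by (simp add: G_def nat_less_eq_zless)
  qed
  define r where "r n = c / 2 ^ G (dyadic_block CARD('n) G n)" for n
  show thesis
  proof
    show "P_seq CARD('n) r"
      unfolding r_def using \<open>strict_mono G\<close> assms(1) by (intro P_seq_dyadic_block_radius) auto
    fix y n assume y: "y \<in> dyadic_core j0 k0" and "1 \<le> n" "N (y - x n) < r n"
    define m where "m = dyadic_block CARD('n) G n"
    have "c * norm (y - x n) < c * (1 / 2 ^ G m)"
      using assms(2)[of "y - x n"] \<open>N (y - x n) < r n\<close> by (simp add: r_def m_def)
    then have "norm (y - x n) < 1 / 2 ^ G m"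
      using assms(1) mult_less_cancel_left_pos by blast
    moreover have "real n \<le> 2 ^ (CARD('n) * G m)"
      using le_dyadic_block[OF \<open>strict_mono G\<close>] by (simp add: m_def flip: of_nat_le_iff)
    ultimately have "y \<in> enlarged_dyadic_M x j0 k0 (J m)"
      using J_ge[of m] \<open>1 \<le> n\<close> y
      by (intro mem_enlarged_dyadic_M_if_near) (auto simp: G_eq G_pow_eq)
    then show "\<exists>m. y \<in> enlarged_dyadic_M x j0 k0 (J m)" ..
  qed
qed

theorem theorem8p5:
  fixes N :: "real^'n \<Rightarrow> real" and U :: "(real^'n) set" and x :: "nat \<Rightarrow> real^'n"
  assumes "is_norm N"
    and "open U" and "U \<noteq> {}"
    and "dyadic_cube j0 k0 \<subseteq> U"
    and "liminf (\<lambda>j. ereal (2 powi (- (int CARD('n) * int j)) * real (card (dyadic_M x j0 k0 j)))) = 0"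
  shows "\<not> unif_eutaxic N x U"
proof
  assume eutaxic: "unif_eutaxic N x U"
  obtain c where "0 < c" and c: "\<And>v. c * norm v \<le> N v"
    using is_norm_ge_norm[OF assms(1)] by blast
  \<comment> \<open>a quarter of the measure of \<open>dyadic_core j0 k0\<close>\<close>
  define a :: real where "a = (1 / (2 * 2 powi j0)) ^ CARD('n) / 4"
  define C :: real where "C = (3 / 2 powi j0) ^ CARD('n)"
  have "0 < a" "0 < C" by (simp_all add: a_def C_def)
  then obtain J where "strict_mono J" "nat (- j0) + 2 \<le> J 0" and small:
    "\<And>m. 2 powi (- (int CARD('n) * int (J m))) * real (card (dyadic_M x j0 k0 (J m))) < a / C * (1/2) ^ m"
    using liminf_eq_0_subseq[OF assms(5), of "\<lambda>m. a / C * (1/2) ^ m"] by auto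
  then obtain r where "P_seq CARD('n) r" and hits_covered: "\<And>y n. y \<in> dyadic_core j0 k0 \<Longrightarrow> 1 \<le> n
      \<Longrightarrow> N (y - x n) < r n \<Longrightarrow> \<exists>m. y \<in> enlarged_dyadic_M x j0 k0 (J m)"
    using radius_adapted_to_generations[OF \<open>0 < c\<close> c] by blast
  then have "AE y in lebesgue. y \<in> U \<longrightarrow> infinite {n. 1 \<le> n \<and> N (y - x n) < r n}"
    using eutaxic by (simp add: unif_eutaxic_def)
  then obtain N0 where "\<And>y. y \<in> space lebesgue - N0 \<Longrightarrow> y \<in> U \<longrightarrow> infinite {n. 1 \<le> n \<and> N (y - x n) < r n}"
    and "N0 \<in> null_sets lebesgue"
    by (rule AE_E3) blast
  then have "dyadic_core j0 k0 \<subseteq> N0 \<union> (\<Union>m. enlarged_dyadic_M x j0 k0 (J m))"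
    using hits_covered dyadic_core_subset[of j0 k0] assms(4) by (fastforce dest!: not_finite_existsD)
  moreover have "emeasure lebesgue (enlarged_dyadic_M x j0 k0 (J m)) \<le> ennreal (a * (1/2) ^ m)" for m
    using emeasure_enlarged_dyadic_M_le[of x j0 k0 "J m"] mult_strict_left_mono[OF small[of m] \<open>0 < C\<close>]
      \<open>0 < C\<close> unfolding C_def[symmetric] by (elim order_trans) (simp add: ennreal_leI)
  ultimately have "emeasure lebesgue (dyadic_core j0 k0) \<le> ennreal (2 * a)"
    using \<open>N0 \<in> null_sets lebesgue\<close> \<open>0 < a\<close> by (intro emeasure_le_geometric_cover) auto
  then show False
    using \<open>0 < a\<close> by (simp add: emeasure_dyadic_core a_def)
qed

end
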